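(* Let $(F,\phi)$ be an acyclic extended representation graph for $E$, let $w\in F^0$, and let $p,q$ be paths in $F$ (of length $\ge0$) with source $w$. Then $r(p)=r(q)$ if and only if $p=q$.
   Context: $E$ is a row-finite directed graph with, for each vertex $v$ emitting an edge, a chosen special edge $e^v\in s^{-1}(v)$; other edges are nonspecial. The double graph $E_d$ has vertices $E^0$ and edges $e$ (real) and $e^*$ (ghost) for $e\in E^1$, with $s_d(e)=s(e),r_d(e)=r(e),s_d(e^* )=r(e),r_d(e^* )=s(e)$. Paths of length $0$ are vertices $w$ with $s(w)=r(w)=w$. A graph is acyclic if it contains no cycle (closed path of length $\ge1$ with pairwise distinct vertex sources). An extended representation graph for $E$ is a pair $(F,\phi)$, $F$ a directed graph, $\phi:F\to E_d$ a graph homomorphism, such that for every $w\in F^0$: (i) $w$ is a source or receives exactly one edge $f_w$; (ii) if $w$ is a source or $\phi(f_w)$ is a nonspecial real edge, $\phi$ maps $s^{-1}(w)$ bijectively onto $s_d^{-1}(\phi(w))$; (iii) if $\phi(f_w)$ is a special real edge, onto $s_d^{-1}(\phi(w))\setminus\{\phi(f_w)^*\}$; (iv) if $\phi(f_w)$ is a ghost edge, onto the ghost edges in $s_d^{-1}(\phi(w))$. *)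

theory Defs
  imports Main
begin

record ('v, 'e) dgraph =
  verts :: "'v set"
  arcs  :: "'e set"
  src   :: "'e \<Rightarrow> 'v"
  rng   :: "'e \<Rightarrow> 'v"

definition wf_graph :: "('v, 'e) dgraph \<Rightarrow> bool" where
  "wf_graph G \<longleftrightarrow> (\<forall>e\<in>arcs G. src G e \<in> verts G \<and> rng G e \<in> verts G)"

definition row_finite :: "('v, 'e) dgraph \<Rightarrow> bool" where
  "row_finite G \<longleftrightarrow> (\<forall>v\<in>verts G. finite {e\<in>arcs G. src G e = v})"

definition special_choice :: "('v, 'e) dgraph \<Rightarrow> ('v \<Rightarrow> 'e) \<Rightarrow> bool" where
  "special_choice G sp \<longleftrightarrow>
     (\<forall>v\<in>verts G. (\<exists>e\<in>arcs G. src G e = v) \<longrightarrow> sp v \<in> arcs G \<and> src G (sp v) = v)"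

datatype 'e dedge = Real 'e | Ghost 'e

definition double_graph :: "('v, 'e) dgraph \<Rightarrow> ('v, 'e dedge) dgraph" where
  "double_graph G = \<lparr> verts = verts G,
     arcs = Real ` arcs G \<union> Ghost ` arcs G,
     src = (\<lambda>x. case x of Real e \<Rightarrow> src G e | Ghost e \<Rightarrow> rng G e),
     rng = (\<lambda>x. case x of Real e \<Rightarrow> rng G e | Ghost e \<Rightarrow> src G e) \<rparr>"

definition is_special_real :: "('v, 'e) dgraph \<Rightarrow> ('v \<Rightarrow> 'e) \<Rightarrow> 'e dedge \<Rightarrow> bool" where
  "is_special_real G sp x \<longleftrightarrow> (\<exists>e. x = Real e \<and> e = sp (src G e))"

definition is_nonspecial_real :: "('v, 'e) dgraph \<Rightarrow> ('v \<Rightarrow> 'e) \<Rightarrow> 'e dedge \<Rightarrow> bool" where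
  "is_nonspecial_real G sp x \<longleftrightarrow> (\<exists>e. x = Real e \<and> e \<noteq> sp (src G e))"

definition is_ghost :: "'e dedge \<Rightarrow> bool" where
  "is_ghost x \<longleftrightarrow> (\<exists>e. x = Ghost e)"

definition star :: "'e dedge \<Rightarrow> 'e dedge" where
  "star x = (case x of Real e \<Rightarrow> Ghost e | Ghost e \<Rightarrow> Real e)"

definition graph_hom :: "('a, 'b) dgraph \<Rightarrow> ('v, 'e) dgraph \<Rightarrow> ('a \<Rightarrow> 'v) \<Rightarrow> ('b \<Rightarrow> 'e) \<Rightarrow> bool" where
  "graph_hom F G \<phi>0 \<phi>1 \<longleftrightarrow>
     (\<forall>w\<in>verts F. \<phi>0 w \<in> verts G) \<and>
     (\<forall>f\<in>arcs F. \<phi>1 f \<in> arcs G \<and> src G (\<phi>1 f) = \<phi>0 (src F f) \<and> rng G (\<phi>1 f) = \<phi>0 (rng F f))"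

definition in_edges :: "('a, 'b) dgraph \<Rightarrow> 'a \<Rightarrow> 'b set" where
  "in_edges F w = {f\<in>arcs F. rng F f = w}"

definition out_edges :: "('a, 'b) dgraph \<Rightarrow> 'a \<Rightarrow> 'b set" where
  "out_edges F w = {f\<in>arcs F. src F f = w}"

definition is_source :: "('a, 'b) dgraph \<Rightarrow> 'a \<Rightarrow> bool" where
  "is_source F w \<longleftrightarrow> in_edges F w = {}"

definition recv_edge :: "('a, 'b) dgraph \<Rightarrow> 'a \<Rightarrow> 'b" where
  "recv_edge F w = (THE f. f \<in> in_edges F w)"

definition ext_rep_graph ::
  "('v, 'e) dgraph \<Rightarrow> ('v \<Rightarrow> 'e) \<Rightarrow> ('a, 'b) dgraph \<Rightarrow> ('a \<Rightarrow> 'v) \<Rightarrow> ('b \<Rightarrow> 'e dedge) \<Rightarrow> bool" where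
  "ext_rep_graph E sp F \<phi>0 \<phi>1 \<longleftrightarrow>
     wf_graph F \<and> graph_hom F (double_graph E) \<phi>0 \<phi>1 \<and>
     (\<forall>w\<in>verts F.
        (is_source F w \<or> (\<exists>!f. f \<in> in_edges F w)) \<and>
        ((is_source F w \<or> is_nonspecial_real E sp (\<phi>1 (recv_edge F w))) \<longrightarrow>
            bij_betw \<phi>1 (out_edges F w) (out_edges (double_graph E) (\<phi>0 w))) \<and>
        ((\<not> is_source F w \<and> is_special_real E sp (\<phi>1 (recv_edge F w))) \<longrightarrow>
            bij_betw \<phi>1 (out_edges F w)
              (out_edges (double_graph E) (\<phi>0 w) - {star (\<phi>1 (recv_edge F w))})) \<and>
        ((\<not> is_source F w \<and> is_ghost (\<phi>1 (recv_edge F w))) \<longrightarrow>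
            bij_betw \<phi>1 (out_edges F w)
              {x \<in> out_edges (double_graph E) (\<phi>0 w). is_ghost x}))"

text \<open>Paths: a start vertex together with a list of edges; the empty list
  gives the path of length 0 at that vertex.\<close>
definition is_path :: "('a, 'b) dgraph \<Rightarrow> 'a \<times> 'b list \<Rightarrow> bool" where
  "is_path F p \<longleftrightarrow> (case p of (v, es) \<Rightarrow>
      v \<in> verts F \<and> set es \<subseteq> arcs F \<and>
      (es \<noteq> [] \<longrightarrow> src F (hd es) = v) \<and>
      (\<forall>i. Suc i < length es \<longrightarrow> rng F (es ! i) = src F (es ! Suc i)))"

definition path_src :: "('a, 'b) dgraph \<Rightarrow> 'a \<times> 'b list \<Rightarrow> 'a" where
  "path_src F p = fst p"

definition path_rng :: "('a, 'b) dgraph \<Rightarrow> 'a \<times> 'b list \<Rightarrow> 'a" where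
  "path_rng F p = (if snd p = [] then fst p else rng F (last (snd p)))"

definition is_cycle :: "('a, 'b) dgraph \<Rightarrow> 'a \<times> 'b list \<Rightarrow> bool" where
  "is_cycle F p \<longleftrightarrow> is_path F p \<and> snd p \<noteq> [] \<and> path_rng F p = path_src F p \<and>
     distinct (map (src F) (snd p))"

definition acyclic_graph :: "('a, 'b) dgraph \<Rightarrow> bool" where
  "acyclic_graph F \<longleftrightarrow> \<not> (\<exists>p. is_cycle F p)"

end

theory Submission
  imports Defs
begin

text \<open>Two paths from \<open>w\<close>
  with the same range therefore agree from the end until one of them is exhausted; the rest of
  the other one is then a closed path at \<open>w\<close>, and a closed path of positive length contains a
  cycle (cut out the stretch between two edges with the same source and induct on the length).\<close>

lemma is_path_iff_successively:
  "is_path F (v, es) \<longleftrightarrow>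
     v \<in> verts F \<and> set es \<subseteq> arcs F \<and> (es \<noteq> [] \<longrightarrow> src F (hd es) = v) \<and>
     successively (\<lambda>e f. rng F e = src F f) es"
  by (simp add: is_path_def successively_conv_nth)

lemma is_path_singleton: "is_path F (v, [e]) \<longleftrightarrow> v \<in> verts F \<and> e \<in> arcs F \<and> src F e = v"
  by (auto simp: is_path_def)

lemma path_rng_snoc [simp]: "path_rng F (v, es @ [e]) = rng F e"
  by (simp add: path_rng_def)

lemma path_rng_in_verts:
  assumes "wf_graph F" "is_path F (v, es)"
  shows "path_rng F (v, es) \<in> verts F"
proof (cases "es = []")
  case False
  then have "last es \<in> arcs F" using assms(2) last_in_set[of es] by (auto simp: is_path_def)
  with False assms(1) show ?thesis by (simp add: path_rng_def wf_graph_def)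
qed (use assms(2) in \<open>simp add: path_rng_def is_path_def\<close>)

lemma is_path_append:
  assumes "wf_graph F"
  shows "is_path F (v, xs @ ys) \<longleftrightarrow> is_path F (v, xs) \<and> is_path F (path_rng F (v, xs), ys)"
  using path_rng_in_verts[OF assms, of v xs]
  by (cases "xs = []"; cases "ys = []")
     (auto simp: is_path_iff_successively successively_append_iff path_rng_def)

lemma is_path_snoc:
  assumes "wf_graph F"
  shows "is_path F (v, es @ [e]) \<longleftrightarrow>
    is_path F (v, es) \<and> e \<in> arcs F \<and> src F e = path_rng F (v, es)"
  using path_rng_in_verts[OF assms, of v es]
  by (auto simp: is_path_append[OF assms] is_path_singleton)

lemma not_distinct_map_decomp:
  assumes "\<not> distinct (map f xs)"
  shows "\<exists>ys a zs b us. xs = ys @ a # zs @ b # us \<and> f a = f b"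
  using assms
proof (induction xs)
  case (Cons x xs)
  show ?case
  proof (cases "distinct (map f xs)")
    case True
    then obtain b where "b \<in> set xs" "f x = f b" using Cons.prems by auto
    then obtain zs us where "xs = zs @ b # us" by (meson split_list)
    with \<open>f x = f b\<close> show ?thesis by (metis append_Nil)
  next
    case False
    then obtain ys a zs b us where "xs = ys @ a # zs @ b # us" "f a = f b" using Cons.IH by blast
    then show ?thesis by (metis append_Cons)
  qed
qed simp

lemma closed_path_contains_cycle:
  assumes "wf_graph F" "is_path F (v, es)" "es \<noteq> []" "path_rng F (v, es) = v"
  shows "\<exists>c. is_cycle F c"
  using assms(2-)
proof (induction "length es" arbitrary: v es rule: less_induct)
  case less
  show ?case
  proof (cases "distinct (map (src F) es)")
    case True
    with less.prems have "is_cycle F (v, es)" by (simp add: is_cycle_def path_src_def)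
    then show ?thesis ..
  next
    case False
    then obtain xs a ys b zs where es: "es = xs @ a # ys @ b # zs" and "src F a = src F b"
      using not_distinct_map_decomp by blast
    have "is_path F (path_rng F (v, xs), (a # ys) @ b # zs)"
      using less.prems(1) es is_path_append[OF assms(1)] by simp
    then have "is_path F (src F a, (a # ys) @ b # zs)"
      by (simp add: is_path_def)
    then have "is_path F (src F a, a # ys)" "is_path F (path_rng F (src F a, a # ys), b # zs)"
      using is_path_append[OF assms(1)] by blast+
    moreover from this(2) have "path_rng F (src F a, a # ys) = src F a"
      using \<open>src F a = src F b\<close> by (simp add: is_path_def)
    moreover have "length (a # ys) < length es" using es by simp
    ultimately show ?thesis using less.hyps by blast
  qed
qed

lemma acyclic_closed_path_Nil:
  assumes "wf_graph F" "acyclic_graph F" "is_path F (v, es)" "path_rng F (v, es) = v"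
  shows "es = []"
  using closed_path_contains_cycle[OF assms(1,3) _ assms(4)] assms(2)
  by (auto simp: acyclic_graph_def)

lemma acyclic_path_eq_if_rng_eq:
  assumes "wf_graph F" "inj_on (rng F) (arcs F)" "acyclic_graph F"
    and "is_path F (v, es)" "is_path F (v, fs)" "path_rng F (v, es) = path_rng F (v, fs)"
  shows "es = fs"
  using assms(4-)
proof (induction es arbitrary: fs rule: rev_induct)
  case Nil
  then have "path_rng F (v, fs) = v" by (simp add: path_rng_def)
  with Nil.prems(2) show ?case using acyclic_closed_path_Nil[OF assms(1,3)] by blast
next
  case (snoc e es)
  show ?case
  proof (cases fs rule: rev_cases)
    case Nil
    with snoc.prems(3) have "path_rng F (v, es @ [e]) = v" by (simp add: path_rng_def)
    with snoc.prems(1) show ?thesis using acyclic_closed_path_Nil[OF assms(1,3)] by blast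
  next
    case fs: (snoc fs' f)
    with snoc.prems have "e \<in> arcs F" "f \<in> arcs F" "rng F e = rng F f"
      by (simp_all add: is_path_snoc[OF assms(1)])
    then have "e = f" using assms(2) by (simp add: inj_on_eq_iff)
    moreover have "es = fs'"
    proof (rule snoc.IH)
      show "is_path F (v, es)" "is_path F (v, fs')"
        using snoc.prems(1,2) fs by (simp_all add: is_path_snoc[OF assms(1)])
      show "path_rng F (v, es) = path_rng F (v, fs')"
        using snoc.prems(1,2) fs \<open>e = f\<close> by (simp add: is_path_snoc[OF assms(1)])
    qed
    ultimately show ?thesis using fs by simp
  qed
qed

lemma ext_rep_graph_wf_graph:
  "ext_rep_graph E sp F \<phi>0 \<phi>1 \<Longrightarrow> wf_graph F"
  unfolding ext_rep_graph_def by blast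

lemma ext_rep_graph_inj_on_rng:
  assumes "ext_rep_graph E sp F \<phi>0 \<phi>1"
  shows "inj_on (rng F) (arcs F)"
proof (rule inj_onI)
  fix f g assume f: "f \<in> arcs F" and g: "g \<in> arcs F" and fg: "rng F f = rng F g"
  let ?v = "rng F f"
  have "?v \<in> verts F"
    using f ext_rep_graph_wf_graph[OF assms] by (simp add: wf_graph_def)
  then have "is_source F ?v \<or> (\<exists>!h. h \<in> in_edges F ?v)"
    using assms unfolding ext_rep_graph_def by blast
  moreover have "f \<in> in_edges F ?v" "g \<in> in_edges F ?v"
    using f g fg by (simp_all add: in_edges_def)
  ultimately show "f = g" unfolding is_source_def by blast
qed

theorem lemma5p10:
  fixes E :: "('v, 'e) dgraph" and sp :: "'v \<Rightarrow> 'e"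
    and F :: "('a, 'b) dgraph" and \<phi>0 :: "'a \<Rightarrow> 'v" and \<phi>1 :: "'b \<Rightarrow> 'e dedge"
    and w :: 'a and p q :: "'a \<times> 'b list"
  assumes "wf_graph E" and "row_finite E" and "special_choice E sp"
    and "ext_rep_graph E sp F \<phi>0 \<phi>1"
    and "acyclic_graph F"
    and "w \<in> verts F"
    and "is_path F p" and "path_src F p = w"
    and "is_path F q" and "path_src F q = w"
  shows "path_rng F p = path_rng F q \<longleftrightarrow> p = q"
proof
  assume same_rng: "path_rng F p = path_rng F q"
  obtain es fs where "p = (w, es)" "q = (w, fs)"
    using assms(8,10) by (metis path_src_def prod.collapse)
  then show "p = q"
    using acyclic_path_eq_if_rng_eq[OF ext_rep_graph_wf_graph[OF assms(4)]
        ext_rep_graph_inj_on_rng[OF assms(4)] assms(5)] assms(7,9) same_rng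
    by simp
qed simp

end
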